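(* Let $M=(E,r)$ be a matroid with $|E|\ge 2$ and let $e\in E$. Then (i) if $e$ is neither a loop nor a coloop, $Q'_M(x,y)=x\,Q'_{M\setminus e}(x,y)+y\,Q'_{M/e}(x,y)$; (ii) if $e$ is a loop or a coloop, $Q'_M(x,y)=(x+y-1)\,Q'_{M/e}(x,y)=(x+y-1)\,Q'_{M\setminus e}(x,y)$.
   Context: $M\setminus e$ and $M/e$ denote the usual matroid deletion and contraction (matroids on $E\setminus\{e\}$). For a polymatroid (in particular a matroid) $N$ on a nonempty ground set $F$, with base polytope $P(N)\subseteq\mathbb R^F$ (for a matroid, the convex hull of indicator vectors of bases), let $\Delta_F=\operatorname{conv}\{\mathbf e_i:i\in F\}$, $\nabla_F=-\Delta_F$, and $Q_N(t,u)=\#\big((P(N)+u\Delta_F+t\nabla_F)\cap\mathbb Z^F\big)$ for integers $t,u\ge0$. This is a polynomial; write $Q_N(t,u)=\sum_{i,j}c_{ij}\binom{u}{j}\binom{t}{i}$ and define $Q'_N(x,y)=\sum_{i,j}c_{ij}(x-1)^i(y-1)^j$. *)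

theory Defs
  imports Complex_Main
begin

definition matroid_rank :: "'a set \<Rightarrow> ('a set \<Rightarrow> nat) \<Rightarrow> bool" where
  "matroid_rank E r \<longleftrightarrow> finite E \<and>
     (\<forall>X. X \<subseteq> E \<longrightarrow> r X \<le> card X) \<and>
     (\<forall>X Y. X \<subseteq> Y \<and> Y \<subseteq> E \<longrightarrow> r X \<le> r Y) \<and>
     (\<forall>X Y. X \<subseteq> E \<and> Y \<subseteq> E \<longrightarrow> r (X \<union> Y) + r (X \<inter> Y) \<le> r X + r Y)"

definition is_loop :: "'a set \<Rightarrow> ('a set \<Rightarrow> nat) \<Rightarrow> 'a \<Rightarrow> bool" where
  "is_loop E r e \<longleftrightarrow> e \<in> E \<and> r {e} = 0"

definition is_coloop :: "'a set \<Rightarrow> ('a set \<Rightarrow> nat) \<Rightarrow> 'a \<Rightarrow> bool" where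
  "is_coloop E r e \<longleftrightarrow> e \<in> E \<and> r (E - {e}) < r E"

text \<open>Deletion M \ e: ground set E - {e}, rank r restricted.  Contraction M / e: ground set
  E - {e}, rank X \<mapsto> r (X \<union> {e}) - r {e}.\<close>
definition delete_rank :: "('a set \<Rightarrow> nat) \<Rightarrow> 'a \<Rightarrow> 'a set \<Rightarrow> nat" where
  "delete_rank r e = r"

definition contract_rank :: "('a set \<Rightarrow> nat) \<Rightarrow> 'a \<Rightarrow> 'a set \<Rightarrow> nat" where
  "contract_rank r e = (\<lambda>X. r (X \<union> {e}) - r {e})"

definition bases :: "'a set \<Rightarrow> ('a set \<Rightarrow> nat) \<Rightarrow> 'a set set" where
  "bases E r = {B. B \<subseteq> E \<and> r B = card B \<and> card B = r E}"

text \<open>Vectors in R^F are represented as functions 'a \<Rightarrow> real (vanishing outside F).\<close>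
definition indic :: "'a set \<Rightarrow> 'a \<Rightarrow> real" where
  "indic B = (\<lambda>a. if a \<in> B then 1 else 0)"

definition conv_hull_fun :: "('a \<Rightarrow> real) set \<Rightarrow> ('a \<Rightarrow> real) set" where
  "conv_hull_fun S = {z. \<exists>T w. finite T \<and> T \<noteq> {} \<and> T \<subseteq> S \<and> (\<forall>v\<in>T. 0 \<le> w v) \<and>
       sum w T = 1 \<and> z = (\<lambda>a. \<Sum>v\<in>T. w v * v a)}"

definition mink_sum :: "('a \<Rightarrow> real) set \<Rightarrow> ('a \<Rightarrow> real) set \<Rightarrow> ('a \<Rightarrow> real) set" where
  "mink_sum A B = {(\<lambda>a. x a + y a) | x y. x \<in> A \<and> y \<in> B}"

definition scale_set :: "real \<Rightarrow> ('a \<Rightarrow> real) set \<Rightarrow> ('a \<Rightarrow> real) set" where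
  "scale_set c S = (\<lambda>v a. c * v a) ` S"

definition base_polytope :: "'a set \<Rightarrow> ('a set \<Rightarrow> nat) \<Rightarrow> ('a \<Rightarrow> real) set" where
  "base_polytope E r = conv_hull_fun (indic ` bases E r)"

definition simplex_Delta :: "'a set \<Rightarrow> ('a \<Rightarrow> real) set" where
  "simplex_Delta F = conv_hull_fun ((\<lambda>i. indic {i}) ` F)"

definition simplex_nabla :: "'a set \<Rightarrow> ('a \<Rightarrow> real) set" where
  "simplex_nabla F = scale_set (-1) (simplex_Delta F)"

definition Q_count :: "'a set \<Rightarrow> ('a set \<Rightarrow> nat) \<Rightarrow> nat \<Rightarrow> nat \<Rightarrow> nat" where
  "Q_count E r t u = card {z :: 'a \<Rightarrow> int. (\<forall>a. a \<notin> E \<longrightarrow> z a = 0) \<and>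
     (\<lambda>a. real_of_int (z a)) \<in>
       mink_sum (mink_sum (base_polytope E r) (scale_set (real u) (simplex_Delta E)))
                (scale_set (real t) (simplex_nabla E))}"

text \<open>The coefficients c_ij of Q in the basis binom(u,j) binom(t,i) (i indexes t, j indexes u):
  the (unique) finitely supported c with Q(t,u) = sum c_ij binom(u,j) binom(t,i) for all t,u \<ge> 0.\<close>
definition Q_coeffs :: "'a set \<Rightarrow> ('a set \<Rightarrow> nat) \<Rightarrow> nat \<times> nat \<Rightarrow> real" where
  "Q_coeffs E r = (SOME c. finite {p. c p \<noteq> 0} \<and>
     (\<forall>t u. real (Q_count E r t u) =
        (\<Sum>p\<in>{p. c p \<noteq> 0}. c p * real (u choose snd p) * real (t choose fst p))))"

definition Q' :: "'a set \<Rightarrow> ('a set \<Rightarrow> nat) \<Rightarrow> real \<Rightarrow> real \<Rightarrow> real" where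
  "Q' E r x y = (let c = Q_coeffs E r in
     (\<Sum>p\<in>{p. c p \<noteq> 0}. c p * (x - 1) ^ fst p * (y - 1) ^ snd p))"

end

theory Submission
  imports Defs
begin

text \<open>
  The lattice points of P(M) + u\<Delta> + t\<nabla> are exactly the integer vectors z supported on E
  with z(E) = r(E) + u - t and z(X) \<le> r(X) + u for all X \<subseteq> E.  Slicing them by the coordinate
  z_e, the slices with z_e \<le> r(E) - r(E - e) are the lattice points of M\<setminus>e for all smaller
  values of t, and the remaining ones are the lattice points of M / e for smaller values of u.
  Hence Q_M(t,u) = \<Sum>_{s\<le>t} Q_{M\<setminus>e}(s,u) + \<Sum>_{v<u+\<lambda>} Q_{M/e}(t,v), where
  \<lambda> = r(e) + r(E - e) - r(E) \<in> {0,1} is the connectivity of {e}, which vanishes exactly for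
  loops and coloops.  Partial summation in t or u shifts the coefficients in the binomial basis,
  which multiplies Q' by x - 1 or y - 1, so Q'_M = x Q'_{M\<setminus>e} + (y - 1 + \<lambda>) Q'_{M/e}.  For a
  loop or coloop, contraction and deletion have the same rank function.
\<close>

section \<open>Rank functions\<close>

lemma matroid_rank_finite: "matroid_rank E r \<Longrightarrow> finite E"
  by (simp add: matroid_rank_def)

lemma matroid_rank_le_card: "matroid_rank E r \<Longrightarrow> X \<subseteq> E \<Longrightarrow> r X \<le> card X"
  by (simp add: matroid_rank_def)

lemma matroid_rank_mono: "matroid_rank E r \<Longrightarrow> X \<subseteq> Y \<Longrightarrow> Y \<subseteq> E \<Longrightarrow> r X \<le> r Y"
  by (simp add: matroid_rank_def)

lemma matroid_rank_submod:
  "matroid_rank E r \<Longrightarrow> X \<subseteq> E \<Longrightarrow> Y \<subseteq> E \<Longrightarrow> r (X \<union> Y) + r (X \<inter> Y) \<le> r X + r Y"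
  by (simp add: matroid_rank_def)

lemma matroid_rank_empty: "matroid_rank E r \<Longrightarrow> r {} = 0"
  using matroid_rank_le_card[of E r "{}"] by simp

lemma matroid_rank_singleton_le: "matroid_rank E r \<Longrightarrow> a \<in> E \<Longrightarrow> r {a} \<le> 1"
  using matroid_rank_le_card[of E r "{a}"] by simp

lemma matroid_rank_insert_le:
  assumes M: "matroid_rank E r" and "X \<subseteq> E" "a \<in> E"
  shows "r (insert a X) \<le> r X + r {a}"
  using matroid_rank_submod[OF M, of X "{a}"] assms by (cases "a \<in> X") (auto simp: insert_absorb)

lemma matroid_rank_subset: "matroid_rank E r \<Longrightarrow> E' \<subseteq> E \<Longrightarrow> matroid_rank E' r"
  unfolding matroid_rank_def by (meson finite_subset order_trans)

lemma matroid_rank_contract: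
  assumes M: "matroid_rank E r" and e: "e \<in> E"
  shows "matroid_rank (E - {e}) (contract_rank r e)"
proof -
  have re: "r {e} \<le> r (X \<union> {e})" if "X \<subseteq> E" for X
    using matroid_rank_mono[OF M, of "{e}" "X \<union> {e}"] that e by blast
  have "contract_rank r e X \<le> card X" if "X \<subseteq> E - {e}" for X
  proof -
    have "X \<subseteq> E" using that by blast
    then show ?thesis
      using matroid_rank_insert_le[OF M, of X e] matroid_rank_le_card[OF M, of X] e
      by (simp add: contract_rank_def)
  qed
  moreover have "contract_rank r e X \<le> contract_rank r e Y" if "X \<subseteq> Y" "Y \<subseteq> E - {e}" for X Y
    using matroid_rank_mono[OF M, of "X \<union> {e}" "Y \<union> {e}"] that e
    by (auto simp: contract_rank_def intro: diff_le_mono)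
  moreover have "contract_rank r e (X \<union> Y) + contract_rank r e (X \<inter> Y)
      \<le> contract_rank r e X + contract_rank r e Y"
    if "X \<subseteq> E - {e}" "Y \<subseteq> E - {e}" for X Y
  proof -
    have "X \<union> {e} \<subseteq> E" "Y \<union> {e} \<subseteq> E" using that e by blast+
    then have "r (X \<union> Y \<union> {e}) + r (X \<inter> Y \<union> {e}) \<le> r (X \<union> {e}) + r (Y \<union> {e})"
      using matroid_rank_submod[OF M, of "X \<union> {e}" "Y \<union> {e}"] by (simp add: Un_Int_distrib2)
    moreover have "X \<union> Y \<subseteq> E" "X \<inter> Y \<subseteq> E" "X \<subseteq> E" "Y \<subseteq> E" using that by blast+
    ultimately show ?thesis
      using re[of "X \<union> Y"] re[of "X \<inter> Y"] re[of X] re[of Y] by (simp add: contract_rank_def)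
  qed
  ultimately show ?thesis
    using matroid_rank_finite[OF M] unfolding matroid_rank_def by auto
qed

lemma matroid_rank_indep_subset:
  assumes M: "matroid_rank E r" and "I \<subseteq> J" "J \<subseteq> E" "r J = card J"
  shows "r I = card I"
proof -
  have fJ: "finite J" using matroid_rank_finite[OF M] assms(3) finite_subset by blast
  have "I \<union> (J - I) = J" "I \<inter> (J - I) = {}" using assms(2) by blast+
  then have "r J \<le> r I + r (J - I)"
    using matroid_rank_submod[OF M, of I "J - I"] assms matroid_rank_empty[OF M] by force
  moreover have "card J = card I + card (J - I)"
    using card_Diff_subset[of I J] assms fJ finite_subset[of I J] card_mono[of J I] by auto
  moreover have "r (J - I) \<le> card (J - I)" "r I \<le> card I"
    using matroid_rank_le_card[OF M, of "J - I"] matroid_rank_le_card[OF M, of I] assms by auto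
  ultimately show ?thesis using assms(4) by linarith
qed

lemma matroid_rank_Un_eq_if_insert_eq:
  assumes M: "matroid_rank E r" and "J \<subseteq> E" "A \<subseteq> E" "finite A"
    and insert_eq: "\<And>x. x \<in> A \<Longrightarrow> r (insert x J) = r J"
  shows "r (J \<union> A) = r J"
  using \<open>finite A\<close> \<open>A \<subseteq> E\<close> insert_eq
proof (induction A rule: finite_induct)
  case (insert x A)
  have "J \<union> A \<subseteq> E" "insert x J \<subseteq> E" using insert.prems \<open>J \<subseteq> E\<close> by blast+
  moreover have "(J \<union> A) \<union> insert x J = J \<union> insert x A" "(J \<union> A) \<inter> insert x J = J"
    using insert.hyps by blast+
  ultimately have "r (J \<union> insert x A) + r J \<le> r (J \<union> A) + r (insert x J)"
    using matroid_rank_submod[OF M, of "J \<union> A" "insert x J"] by simp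
  moreover have "r J \<le> r (J \<union> insert x A)"
    using matroid_rank_mono[OF M, of J "J \<union> insert x A"] insert.prems \<open>J \<subseteq> E\<close> by blast
  ultimately show ?case using insert by simp
qed simp

text \<open>A maximum-size independent subset of X spans X: adding an element of X to it would either
  keep it independent, contradicting maximality, or not raise the rank.\<close>
lemma matroid_rank_indep_extend:
  assumes M: "matroid_rank E r" and "I \<subseteq> X" "X \<subseteq> E" "r I = card I"
  obtains J where "I \<subseteq> J" "J \<subseteq> X" "r J = card J" "r J = r X"
proof -
  have fX: "finite X" using matroid_rank_finite[OF M] assms finite_subset by blast
  define F where "F = {J. I \<subseteq> J \<and> J \<subseteq> X \<and> r J = card J}"
  have "I \<in> F" using assms by (simp add: F_def)
  moreover have "\<forall>J. J \<in> F \<longrightarrow> card J < Suc (card X)"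
    using fX by (auto simp: F_def less_Suc_eq_le card_mono)
  ultimately obtain J where J: "J \<in> F" and Jmax: "\<And>J'. J' \<in> F \<Longrightarrow> card J' \<le> card J"
    using ex_has_greatest_nat[of "\<lambda>J. J \<in> F" I card] by blast
  have IJ: "I \<subseteq> J" and JX: "J \<subseteq> X" and rJ: "r J = card J" using J by (auto simp: F_def)
  have fJ: "finite J" using fX JX finite_subset by blast
  have "r (insert x J) = r J" if x: "x \<in> X - J" for x
  proof (rule ccontr)
    assume "r (insert x J) \<noteq> r J"
    moreover have "r (insert x J) \<le> r J + 1" "r J \<le> r (insert x J)"
      using matroid_rank_insert_le[OF M, of J x] matroid_rank_singleton_le[OF M, of x]
        matroid_rank_mono[OF M, of J "insert x J"] JX assms x by (auto simp: subset_iff)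
    ultimately have "insert x J \<in> F" using J x fJ by (auto simp: F_def)
    then show False using Jmax[of "insert x J"] x fJ by simp
  qed
  then have "r (J \<union> (X - J)) = r J"
    using matroid_rank_Un_eq_if_insert_eq[OF M, of J "X - J"] fX JX assms by blast
  then have "r X = r J" using JX by (simp add: Un_absorb1)
  then show thesis using that IJ JX rJ by simp
qed

lemma matroid_rank_ex_basis_inter:
  assumes M: "matroid_rank E r" and P: "P \<subseteq> E"
  obtains B where "B \<in> bases E r" "r P \<le> card (P \<inter> B)"
proof -
  obtain J where J: "J \<subseteq> P" "r J = card J" "r J = r P"
    using matroid_rank_indep_extend[OF M, of "{}" P] P matroid_rank_empty[OF M] by auto
  obtain B where B: "J \<subseteq> B" "B \<subseteq> E" "r B = card B" "r B = r E"
    using matroid_rank_indep_extend[OF M, of J E] J P by auto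
  have "card J \<le> card (P \<inter> B)"
    using card_mono[of "P \<inter> B" J] matroid_rank_finite[OF M] J B P finite_subset by blast
  then show thesis using that[of B] B J by (simp add: bases_def)
qed

lemma matroid_rank_insert_ge:
  assumes M: "matroid_rank E r" and e: "e \<in> E" and Y: "Y \<subseteq> E - {e}"
  shows "r Y + (r E - r (E - {e})) \<le> r (insert e Y)"
proof -
  have "(E - {e}) \<union> insert e Y = E" "(E - {e}) \<inter> insert e Y = Y" "insert e Y \<subseteq> E"
    using e Y by blast+
  moreover have "r Y \<le> r (insert e Y)"
    using matroid_rank_mono[OF M, of Y "insert e Y"] \<open>insert e Y \<subseteq> E\<close> by blast
  ultimately show ?thesis
    using matroid_rank_submod[OF M, of "E - {e}" "insert e Y"] by simp
qed

definition connectivity :: "'a set \<Rightarrow> ('a set \<Rightarrow> nat) \<Rightarrow> 'a set \<Rightarrow> nat" where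
  "connectivity E r X = r X + r (E - X) - r E"

lemma connectivity_singleton:
  assumes M: "matroid_rank E r" and e: "e \<in> E"
  shows "connectivity E r {e} = (if is_loop E r e \<or> is_coloop E r e then 0 else 1)"
proof -
  have "r (E - {e}) \<le> r E" using matroid_rank_mono[OF M, of "E - {e}" E] by blast
  moreover have "r E \<le> r (E - {e}) + r {e}"
    using matroid_rank_insert_le[OF M, of "E - {e}" e] e by (simp add: insert_absorb)
  moreover have "r {e} \<le> 1" using matroid_rank_singleton_le[OF M e] .
  ultimately show ?thesis using e by (auto simp: connectivity_def is_loop_def is_coloop_def)
qed

lemma contract_rank_eq_if_connectivity_zero:
  assumes M: "matroid_rank E r" and e: "e \<in> E" and "connectivity E r {e} = 0"
    and Y: "Y \<subseteq> E - {e}"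
  shows "contract_rank r e Y = r Y"
proof -
  have "r Y + (r E - r (E - {e})) \<le> r (insert e Y)" using matroid_rank_insert_ge[OF M e Y] .
  moreover have "r (insert e Y) \<le> r Y + r {e}"
    using matroid_rank_insert_le[OF M, of Y e] Y e by blast
  moreover have "r {e} + r (E - {e}) \<le> r E" using assms(3) by (simp add: connectivity_def)
  ultimately show ?thesis by (simp add: contract_rank_def)
qed

section \<open>Lattice points of the dilated base polytope\<close>

definition lattice_points :: "'a set \<Rightarrow> ('a set \<Rightarrow> nat) \<Rightarrow> nat \<Rightarrow> nat \<Rightarrow> ('a \<Rightarrow> int) set" where
  "lattice_points E r t u = {z. (\<forall>a. a \<notin> E \<longrightarrow> z a = 0) \<and>
     (\<Sum>a\<in>E. z a) = int (r E) + int u - int t \<and>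
     (\<forall>X. X \<subseteq> E \<longrightarrow> (\<Sum>a\<in>X. z a) \<le> int (r X) + int u)}"

definition Q_polytope :: "'a set \<Rightarrow> ('a set \<Rightarrow> nat) \<Rightarrow> nat \<Rightarrow> nat \<Rightarrow> ('a \<Rightarrow> real) set" where
  "Q_polytope E r t u = mink_sum (mink_sum (base_polytope E r) (scale_set (real u) (simplex_Delta E)))
     (scale_set (real t) (simplex_nabla E))"

lemma lattice_point_sum_le:
  "z \<in> lattice_points E r t u \<Longrightarrow> X \<subseteq> E \<Longrightarrow> (\<Sum>a\<in>X. z a) \<le> int (r X) + int u"
  by (simp add: lattice_points_def)

lemma lattice_point_sum_eq:
  "z \<in> lattice_points E r t u \<Longrightarrow> (\<Sum>a\<in>E. z a) = int (r E) + int u - int t"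
  by (simp add: lattice_points_def)

lemma lattice_point_outside: "z \<in> lattice_points E r t u \<Longrightarrow> a \<notin> E \<Longrightarrow> z a = 0"
  by (simp add: lattice_points_def)

lemma lattice_point_coord_le:
  assumes "z \<in> lattice_points E r t u" "e \<in> E"
  shows "z e \<le> int (r {e}) + int u"
  using lattice_point_sum_le[OF assms(1), of "{e}"] assms(2) by simp

lemma lattice_point_coord_ge:
  assumes M: "matroid_rank E r" and z: "z \<in> lattice_points E r t u" and e: "e \<in> E"
  shows "int (r E) - int (r (E - {e})) - int t \<le> z e"
proof -
  have "(\<Sum>a\<in>E. z a) = z e + (\<Sum>a\<in>E - {e}. z a)"
    using sum.remove[OF matroid_rank_finite[OF M] e] .
  then show ?thesis
    using lattice_point_sum_le[OF z, of "E - {e}"] lattice_point_sum_eq[OF z] by simp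
qed

lemma finite_lattice_points:
  assumes M: "matroid_rank E r"
  shows "finite (lattice_points E r t u)"
proof -
  let ?box = "{f. \<forall>x. (x \<in> E \<longrightarrow> f x \<in> {- int t .. 1 + int u}) \<and> (x \<notin> E \<longrightarrow> f x = 0)}"
  have "lattice_points E r t u \<subseteq> ?box"
  proof
    fix z assume z: "z \<in> lattice_points E r t u"
    have "z x \<in> {- int t .. 1 + int u}" if x: "x \<in> E" for x
      using lattice_point_coord_le[OF z x] lattice_point_coord_ge[OF M z x]
        matroid_rank_singleton_le[OF M x] matroid_rank_mono[OF M, of "E - {x}" E] by auto
    then show "z \<in> ?box" using z by (auto simp: lattice_points_def)
  qed
  moreover have "finite ?box"
    by (rule finite_set_of_finite_funs) (use matroid_rank_finite[OF M] in auto)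
  ultimately show ?thesis by (rule finite_subset)
qed

lemma conv_hull_fun_sum_le:
  assumes "p \<in> conv_hull_fun S" "\<And>v. v \<in> S \<Longrightarrow> (\<Sum>a\<in>X. v a) \<le> c"
  shows "(\<Sum>a\<in>X. p a) \<le> c"
proof -
  obtain T w where T: "finite T" "T \<subseteq> S" "\<forall>v\<in>T. 0 \<le> w v" "sum w T = 1"
    and p: "p = (\<lambda>a. \<Sum>v\<in>T. w v * v a)" using assms(1) unfolding conv_hull_fun_def by blast
  have "(\<Sum>a\<in>X. p a) = (\<Sum>v\<in>T. w v * (\<Sum>a\<in>X. v a))"
    unfolding p by (simp add: sum.swap[of _ X] sum_distrib_left)
  also have "\<dots> \<le> (\<Sum>v\<in>T. w v * c)"
    by (rule sum_mono) (use T assms(2) in \<open>auto intro: mult_left_mono\<close>)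
  also have "\<dots> = c" using T by (simp add: sum_distrib_right[symmetric])
  finally show ?thesis .
qed

lemma conv_hull_fun_sum_ge:
  assumes "p \<in> conv_hull_fun S" "\<And>v. v \<in> S \<Longrightarrow> c \<le> (\<Sum>a\<in>X. v a)"
  shows "c \<le> (\<Sum>a\<in>X. p a)"
proof -
  obtain T w where T: "finite T" "T \<subseteq> S" "\<forall>v\<in>T. 0 \<le> w v" "sum w T = 1"
    and p: "p = (\<lambda>a. \<Sum>v\<in>T. w v * v a)" using assms(1) unfolding conv_hull_fun_def by blast
  have "c = (\<Sum>v\<in>T. w v * c)" using T by (simp add: sum_distrib_right[symmetric])
  also have "\<dots> \<le> (\<Sum>v\<in>T. w v * (\<Sum>a\<in>X. v a))"
    by (rule sum_mono) (use T assms(2) in \<open>auto intro: mult_left_mono\<close>)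
  also have "\<dots> = (\<Sum>a\<in>X. p a)"
    unfolding p by (simp add: sum.swap[of _ X] sum_distrib_left)
  finally show ?thesis .
qed

lemma sum_indic: "finite X \<Longrightarrow> (\<Sum>a\<in>X. indic B a) = real (card (X \<inter> B))"
  by (simp add: indic_def sum.inter_restrict[symmetric])

lemma base_polytope_sum_le:
  assumes M: "matroid_rank E r" and X: "X \<subseteq> E" and p: "p \<in> base_polytope E r"
  shows "(\<Sum>a\<in>X. p a) \<le> real (r X)"
proof (rule conv_hull_fun_sum_le[OF p[unfolded base_polytope_def]])
  fix v assume "v \<in> indic ` bases E r"
  then obtain B where B: "B \<subseteq> E" "r B = card B" "v = indic B" by (auto simp: bases_def)
  have "card (X \<inter> B) = r (X \<inter> B)"
    using matroid_rank_indep_subset[OF M, of "X \<inter> B" B] B by auto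
  also have "\<dots> \<le> r X" using matroid_rank_mono[OF M, of "X \<inter> B" X] X by blast
  finally show "(\<Sum>a\<in>X. v a) \<le> real (r X)"
    using B sum_indic[of X B] finite_subset[OF X matroid_rank_finite[OF M]] by simp
qed

lemma base_polytope_sum_eq:
  assumes M: "matroid_rank E r" and p: "p \<in> base_polytope E r"
  shows "(\<Sum>a\<in>E. p a) = real (r E)"
proof (rule antisym)
  show "(\<Sum>a\<in>E. p a) \<le> real (r E)" using base_polytope_sum_le[OF M order_refl p] .
  show "real (r E) \<le> (\<Sum>a\<in>E. p a)"
  proof (rule conv_hull_fun_sum_ge[OF p[unfolded base_polytope_def]])
    fix v assume "v \<in> indic ` bases E r"
    then obtain B where "B \<subseteq> E" "card B = r E" "v = indic B" by (auto simp: bases_def)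
    then show "real (r E) \<le> (\<Sum>a\<in>E. v a)"
      using sum_indic[OF matroid_rank_finite[OF M], of B] by (simp add: Int_absorb1)
  qed
qed

lemma simplex_Delta_sum_bounds:
  assumes "finite X" and p: "p \<in> simplex_Delta E"
  shows "0 \<le> (\<Sum>a\<in>X. p a)" "(\<Sum>a\<in>X. p a) \<le> 1" "E \<subseteq> X \<Longrightarrow> (\<Sum>a\<in>X. p a) = 1"
proof -
  have card_le: "card (X \<inter> {i}) \<le> 1" for i
    using card_mono[of "{i}" "X \<inter> {i}"] by simp
  show "0 \<le> (\<Sum>a\<in>X. p a)"
    by (rule conv_hull_fun_sum_ge[OF p[unfolded simplex_Delta_def]])
      (auto intro!: sum_nonneg simp: indic_def)
  show le: "(\<Sum>a\<in>X. p a) \<le> 1"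
    by (rule conv_hull_fun_sum_le[OF p[unfolded simplex_Delta_def]])
      (use card_le in \<open>auto simp: sum_indic[OF \<open>finite X\<close>]\<close>)
  assume "E \<subseteq> X"
  then have "1 \<le> (\<Sum>a\<in>X. p a)"
    by (intro conv_hull_fun_sum_ge[OF p[unfolded simplex_Delta_def]])
      (auto simp: sum_indic[OF \<open>finite X\<close>] Int_absorb1)
  with le show "(\<Sum>a\<in>X. p a) = 1" by simp
qed

lemma simplex_Delta_memI:
  assumes "finite E" "\<And>i. 0 \<le> v i" "\<And>i. i \<notin> E \<Longrightarrow> v i = 0" "(\<Sum>i\<in>E. v i) = 1"
  shows "v \<in> simplex_Delta E"
proof -
  have inj: "inj_on (\<lambda>i. indic {i}) E"
    by (rule inj_onI) (metis indic_def singletonD singletonI zero_neq_one)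
  define w where "w = v \<circ> inv_into E (\<lambda>i. indic {i})"
  have w_indic: "w (indic {i}) = v i" if "i \<in> E" for i
    using inv_into_f_f[OF inj that] by (simp add: w_def)
  have "(\<lambda>j. \<Sum>x\<in>(\<lambda>i. indic {i}) ` E. w x * x j) = v"
  proof
    fix j
    have "(\<Sum>x\<in>(\<lambda>i. indic {i}) ` E. w x * x j) = (\<Sum>i\<in>E. v i * indic {i} j)"
      unfolding sum.reindex[OF inj] by (simp add: w_indic)
    also have "\<dots> = (\<Sum>i\<in>E. if i = j then v j else 0)"
      by (rule sum.cong) (auto simp: indic_def)
    also have "\<dots> = v j" using assms(1,3) by auto
    finally show "(\<Sum>x\<in>(\<lambda>i. indic {i}) ` E. w x * x j) = v j" .
  qed
  moreover have "sum w ((\<lambda>i. indic {i}) ` E) = 1"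
    using assms(4) by (simp add: sum.reindex[OF inj] w_indic)
  moreover have "E \<noteq> {}" using assms(4) by auto
  ultimately show ?thesis
    unfolding simplex_Delta_def conv_hull_fun_def
    using assms(1,2) by (auto simp: w_def intro!: exI[of _ "(\<lambda>i. indic {i}) ` E"] exI[of _ w])
qed

lemma simplex_Delta_scale_int:
  assumes "finite E" "E \<noteq> {}" "\<And>i. 0 \<le> a i" "\<And>i. i \<notin> E \<Longrightarrow> a i = 0" "(\<Sum>i\<in>E. a i) = int n"
  obtains v where "v \<in> simplex_Delta E" "\<And>i. real_of_int (a i) = real n * v i"
proof (cases "n = 0")
  case True
  obtain i0 where "i0 \<in> E" using assms(2) by blast
  then have "indic {i0} \<in> simplex_Delta E"
    using assms(1) by (intro simplex_Delta_memI) (auto simp: indic_def)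
  moreover have "a i = 0" for i
    using sum_nonneg_eq_0_iff[OF assms(1), of a] assms(3-5) True by (cases "i \<in> E") auto
  ultimately show thesis using that True by simp
next
  case False
  have "(\<lambda>i. real_of_int (a i) / real n) \<in> simplex_Delta E"
    using assms False
    by (intro simplex_Delta_memI) (auto simp: sum_divide_distrib[symmetric] simp flip: of_int_sum)
  then show thesis using that False by simp
qed

lemma mink_sum_memI: "x \<in> A \<Longrightarrow> y \<in> B \<Longrightarrow> (\<lambda>a. x a + y a) \<in> mink_sum A B"
  unfolding mink_sum_def by blast

lemma scale_set_memI: "v \<in> S \<Longrightarrow> (\<lambda>a. c * v a) \<in> scale_set c S"
  unfolding scale_set_def by blast

lemma lattice_point_of_Q_polytope:
  assumes M: "matroid_rank E r" and z0: "\<And>a. a \<notin> E \<Longrightarrow> z a = 0"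
    and zP: "(\<lambda>a. real_of_int (z a)) \<in> Q_polytope E r t u"
  shows "z \<in> lattice_points E r t u"
proof -
  have fE: "finite E" using matroid_rank_finite[OF M] .
  obtain q w' where q: "q \<in> mink_sum (base_polytope E r) (scale_set (real u) (simplex_Delta E))"
    and w': "w' \<in> scale_set (real t) (simplex_nabla E)"
    and zq: "(\<lambda>a. real_of_int (z a)) = (\<lambda>a. q a + w' a)"
    using zP unfolding Q_polytope_def mink_sum_def[of _ "scale_set _ _"] by blast
  obtain p v where p: "p \<in> base_polytope E r" and v: "v \<in> simplex_Delta E"
    and qpv: "q = (\<lambda>a. p a + real u * v a)"
    using q unfolding mink_sum_def scale_set_def by blast
  obtain w where w: "w \<in> simplex_Delta E" and w'w: "w' = (\<lambda>a. real t * (- 1 * w a))"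
    using w' unfolding simplex_nabla_def scale_set_def by blast
  have z: "real_of_int (z a) = p a + real u * v a - real t * w a" for a
    using fun_cong[OF zq, of a] by (simp add: qpv w'w)
  have sum_z: "real_of_int (\<Sum>a\<in>X. z a)
      = (\<Sum>a\<in>X. p a) + real u * (\<Sum>a\<in>X. v a) - real t * (\<Sum>a\<in>X. w a)" for X
    by (simp add: z sum.distrib sum_subtractf sum_distrib_left)
  have "real_of_int (\<Sum>a\<in>E. z a) = real (r E) + real u - real t"
    using sum_z[of E] base_polytope_sum_eq[OF M p]
      simplex_Delta_sum_bounds(3)[OF fE v] simplex_Delta_sum_bounds(3)[OF fE w] by simp
  then have "(\<Sum>a\<in>E. z a) = int (r E) + int u - int t" by linarith
  moreover have "(\<Sum>a\<in>X. z a) \<le> int (r X) + int u" if X: "X \<subseteq> E" for X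
  proof -
    have fX: "finite X" using fE X finite_subset by blast
    have "real u * (\<Sum>a\<in>X. v a) \<le> real u"
      using simplex_Delta_sum_bounds(2)[OF fX v] by (simp add: mult_left_le)
    moreover have "0 \<le> real t * (\<Sum>a\<in>X. w a)"
      using simplex_Delta_sum_bounds(1)[OF fX w] by simp
    ultimately have "real_of_int (\<Sum>a\<in>X. z a) \<le> real (r X) + real u"
      using sum_z[of X] base_polytope_sum_le[OF M X p] by linarith
    then show ?thesis by linarith
  qed
  ultimately show ?thesis using z0 by (simp add: lattice_points_def)
qed

lemma lattice_point_excess_le:
  assumes M: "matroid_rank E r" and z: "z \<in> lattice_points E r t u"
    and B: "r {i\<in>E. 0 < z i} \<le> card ({i\<in>E. 0 < z i} \<inter> B)"
  shows "(\<Sum>i\<in>E. max (z i - of_bool (i \<in> B)) 0) \<le> int u"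
proof -
  define P where "P = {i\<in>E. 0 < z i}"
  have fE: "finite E" using matroid_rank_finite[OF M] .
  have fP: "finite P" using fE by (simp add: P_def)
  have "(\<Sum>i\<in>E. max (z i - of_bool (i \<in> B)) 0) = (\<Sum>i\<in>P. z i - of_bool (i \<in> B))"
    using fE by (intro sum.mono_neutral_cong_right) (auto simp: P_def)
  also have "\<dots> = (\<Sum>i\<in>P. z i) - int (card (P \<inter> B))"
    using fP by (simp add: sum_subtractf of_bool_def sum.If_cases Int_commute)
  also have "\<dots> \<le> int u"
  proof -
    have "(\<Sum>i\<in>P. z i) \<le> int (r P) + int u"
      using lattice_point_sum_le[OF z, of P] by (simp add: P_def)
    then show ?thesis using B by (simp add: P_def)
  qed
  finally show ?thesis .
qed

lemma lattice_point_decompose: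
  assumes M: "matroid_rank E r" and "E \<noteq> {}" and z: "z \<in> lattice_points E r t u"
  obtains B a b where "B \<in> bases E r" "\<And>i. 0 \<le> a i" "\<And>i. 0 \<le> b i"
    "\<And>i. i \<notin> E \<Longrightarrow> a i = 0" "\<And>i. i \<notin> E \<Longrightarrow> b i = 0"
    "(\<Sum>i\<in>E. a i) = int u" "(\<Sum>i\<in>E. b i) = int t" "\<And>i. z i = of_bool (i \<in> B) + a i - b i"
proof -
  have fE: "finite E" using matroid_rank_finite[OF M] .
  obtain i0 where i0: "i0 \<in> E" using assms(2) by blast
  obtain B where B: "B \<in> bases E r" "r {i\<in>E. 0 < z i} \<le> card ({i\<in>E. 0 < z i} \<inter> B)"
    using matroid_rank_ex_basis_inter[OF M, of "{i\<in>E. 0 < z i}"] by blast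
  have BE: "B \<subseteq> E" "card B = r E" using B(1) by (auto simp: bases_def)
  txt \<open>z = 1_B + a - b, where a and b are the positive and negative parts of z - 1_B,
    both raised at i0 by the slack c so that they sum to u and t.\<close>
  define pos where "pos i = max (z i - of_bool (i \<in> B)) 0" for i
  define neg where "neg i = max (of_bool (i \<in> B) - z i) 0" for i
  define c where "c = int u - (\<Sum>i\<in>E. pos i)"
  define a where "a i = pos i + (if i = i0 then c else 0)" for i
  define b where "b i = neg i + (if i = i0 then c else 0)" for i
  have c: "0 \<le> c" using lattice_point_excess_le[OF M z B(2)] by (simp add: c_def pos_def)
  have "pos i - neg i = z i - of_bool (i \<in> B)" for i by (simp add: pos_def neg_def max_def)
  then have "(\<Sum>i\<in>E. pos i) - (\<Sum>i\<in>E. neg i) = (\<Sum>i\<in>E. z i) - (\<Sum>i\<in>E. of_bool (i \<in> B))"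
    by (simp add: sum_subtractf[symmetric])
  also have "\<dots> = int u - int t"
    using lattice_point_sum_eq[OF z] BE fE by (simp add: of_bool_def sum.If_cases Int_absorb1)
  finally have "(\<Sum>i\<in>E. neg i) = int t + (\<Sum>i\<in>E. pos i) - int u" by simp
  then have "(\<Sum>i\<in>E. a i) = int u" "(\<Sum>i\<in>E. b i) = int t"
    using fE i0 by (simp_all add: a_def b_def sum.distrib c_def)
  moreover have "i \<notin> E \<Longrightarrow> a i = 0" "i \<notin> E \<Longrightarrow> b i = 0" for i
    using lattice_point_outside[OF z, of i] BE i0 by (auto simp: a_def b_def pos_def neg_def)
  moreover have "0 \<le> a i" "0 \<le> b i" "z i = of_bool (i \<in> B) + a i - b i" for i
    using c by (auto simp: a_def b_def pos_def neg_def)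
  ultimately show thesis by (intro that[OF B(1)]) auto
qed

lemma Q_polytope_of_lattice_point:
  assumes M: "matroid_rank E r" and "E \<noteq> {}" and z: "z \<in> lattice_points E r t u"
  shows "(\<lambda>i. real_of_int (z i)) \<in> Q_polytope E r t u"
proof -
  have fE: "finite E" using matroid_rank_finite[OF M] .
  obtain B a b where B: "B \<in> bases E r" and ab: "\<And>i. 0 \<le> a i" "\<And>i. 0 \<le> b i"
    "\<And>i. i \<notin> E \<Longrightarrow> a i = 0" "\<And>i. i \<notin> E \<Longrightarrow> b i = 0" "(\<Sum>i\<in>E. a i) = int u"
    "(\<Sum>i\<in>E. b i) = int t" and zab: "\<And>i. z i = of_bool (i \<in> B) + a i - b i"
    using lattice_point_decompose[OF assms] by blast
  obtain v where v: "v \<in> simplex_Delta E" "\<And>i. real_of_int (a i) = real u * v i"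
    using simplex_Delta_scale_int[OF fE assms(2) ab(1,3,5)] by blast
  obtain w where w: "w \<in> simplex_Delta E" "\<And>i. real_of_int (b i) = real t * w i"
    using simplex_Delta_scale_int[OF fE assms(2) ab(2,4,6)] by blast
  have "indic B \<in> base_polytope E r"
    unfolding base_polytope_def conv_hull_fun_def using B
    by (auto intro!: exI[of _ "{indic B}"] exI[of _ "\<lambda>_. 1"])
  moreover have "(\<lambda>i. - 1 * w i) \<in> simplex_nabla E"
    unfolding simplex_nabla_def using w(1) by (rule scale_set_memI)
  ultimately have "(\<lambda>i. (indic B i + real u * v i) + real t * (- 1 * w i)) \<in> Q_polytope E r t u"
    unfolding Q_polytope_def using v(1) by (intro mink_sum_memI scale_set_memI)
  moreover have "(\<lambda>i. (indic B i + real u * v i) + real t * (- 1 * w i)) = (\<lambda>i. real_of_int (z i))"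
    using zab by (simp add: fun_eq_iff indic_def flip: v(2) w(2))
  ultimately show ?thesis by simp
qed

lemma Q_count_eq_card_lattice_points:
  assumes "matroid_rank E r" "E \<noteq> {}"
  shows "Q_count E r t u = card (lattice_points E r t u)"
proof -
  have "{z. (\<forall>a. a \<notin> E \<longrightarrow> z a = 0) \<and> (\<lambda>a. real_of_int (z a)) \<in> Q_polytope E r t u}
      = lattice_points E r t u"
  proof (intro set_eqI iffI)
    fix z assume "z \<in> {z. (\<forall>a. a \<notin> E \<longrightarrow> z a = 0) \<and> (\<lambda>a. real_of_int (z a)) \<in> Q_polytope E r t u}"
    then show "z \<in> lattice_points E r t u" using lattice_point_of_Q_polytope[OF assms(1)] by simp
  next
    fix z assume z: "z \<in> lattice_points E r t u"
    then show "z \<in> {z. (\<forall>a. a \<notin> E \<longrightarrow> z a = 0) \<and> (\<lambda>a. real_of_int (z a)) \<in> Q_polytope E r t u}"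
      using Q_polytope_of_lattice_point[OF assms z] lattice_point_outside[OF z] by simp
  qed
  then show ?thesis by (simp add: Q_count_def Q_polytope_def)
qed

section \<open>Slicing lattice points along an element\<close>

lemma all_subset_Diff_singleton_iff:
  assumes "e \<in> E"
  shows "(\<forall>X. X \<subseteq> E \<longrightarrow> P X) \<longleftrightarrow> (\<forall>Y. Y \<subseteq> E - {e} \<longrightarrow> P Y \<and> P (insert e Y))"
proof safe
  fix X assume P: "\<forall>Y. Y \<subseteq> E - {e} \<longrightarrow> P Y \<and> P (insert e Y)" and X: "X \<subseteq> E"
  show "P X"
  proof (cases "e \<in> X")
    case True
    then have "X = insert e (X - {e})" by blast
    then show ?thesis using P[rule_format, of "X - {e}"] X by auto
  qed (use P X in auto)
next
  fix Y assume "\<forall>X. X \<subseteq> E \<longrightarrow> P X" "Y \<subseteq> E - {e}"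
  moreover have "insert e Y \<subseteq> E" "Y \<subseteq> E" using \<open>Y \<subseteq> E - {e}\<close> assms by blast+
  ultimately show "P Y" "P (insert e Y)" by blast+
qed

lemma lattice_point_fun_upd_iff:
  assumes M: "matroid_rank E r" and e: "e \<in> E" and z0: "z e = 0"
  shows "z(e := k) \<in> lattice_points E r t u \<longleftrightarrow> (\<forall>a. a \<notin> E - {e} \<longrightarrow> z a = 0) \<and>
     (\<Sum>a\<in>E - {e}. z a) + k = int (r E) + int u - int t \<and>
     (\<forall>Y. Y \<subseteq> E - {e} \<longrightarrow> (\<Sum>a\<in>Y. z a) \<le> int (r Y) + int u \<and>
                             (\<Sum>a\<in>Y. z a) + k \<le> int (r (insert e Y)) + int u)"
proof -
  have sum_upd: "(\<Sum>a\<in>Y. (z(e := k)) a) = (\<Sum>a\<in>Y. z a)" if "Y \<subseteq> E - {e}" for Y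
    using that by (intro sum.cong) auto
  have sum_upd_insert: "(\<Sum>a\<in>insert e Y. (z(e := k)) a) = (\<Sum>a\<in>Y. z a) + k"
    if "Y \<subseteq> E - {e}" for Y
  proof -
    have "finite Y" "e \<notin> Y"
      using that finite_subset[of Y E] matroid_rank_finite[OF M] by auto
    then show ?thesis using sum_upd[OF that] by simp
  qed
  have "insert e (E - {e}) = E" using e by blast
  then have "(\<Sum>a\<in>E. (z(e := k)) a) = (\<Sum>a\<in>E - {e}. z a) + k"
    using sum_upd_insert[of "E - {e}"] by simp
  moreover have "(\<forall>a. a \<notin> E \<longrightarrow> (z(e := k)) a = 0) \<longleftrightarrow> (\<forall>a. a \<notin> E - {e} \<longrightarrow> z a = 0)"
    using e z0 by auto
  ultimately show ?thesis
    unfolding lattice_points_def mem_Collect_eq all_subset_Diff_singleton_iff[OF e]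
    by (simp add: sum_upd sum_upd_insert del: fun_upd_apply)
qed

lemma lattice_points_lower_slice:
  assumes M: "matroid_rank E r" and e: "e \<in> E" and z0: "z e = 0" and "s \<le> t"
  shows "z(e := int s - int t + int (r E - r (E - {e}))) \<in> lattice_points E r t u
    \<longleftrightarrow> z \<in> lattice_points (E - {e}) r s u"
proof -
  let ?k = "int s - int t + int (r E - r (E - {e}))"
  have "r (E - {e}) \<le> r E" using matroid_rank_mono[OF M, of "E - {e}" E] by blast
  then have "(\<Sum>a\<in>E - {e}. z a) + ?k = int (r E) + int u - int t
      \<longleftrightarrow> (\<Sum>a\<in>E - {e}. z a) = int (r (E - {e})) + int u - int s"
    by (simp add: of_nat_diff) linarith
  moreover have "(\<Sum>a\<in>Y. z a) + ?k \<le> int (r (insert e Y)) + int u"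
    if "Y \<subseteq> E - {e}" "(\<Sum>a\<in>Y. z a) \<le> int (r Y) + int u" for Y
    using matroid_rank_insert_ge[OF M e that(1)] that(2) \<open>s \<le> t\<close> by linarith
  then have "(\<forall>Y. Y \<subseteq> E - {e} \<longrightarrow> (\<Sum>a\<in>Y. z a) \<le> int (r Y) + int u \<and>
        (\<Sum>a\<in>Y. z a) + ?k \<le> int (r (insert e Y)) + int u)
      \<longleftrightarrow> (\<forall>Y. Y \<subseteq> E - {e} \<longrightarrow> (\<Sum>a\<in>Y. z a) \<le> int (r Y) + int u)"
    by blast
  ultimately show ?thesis
    unfolding lattice_point_fun_upd_iff[where z = z, OF M e z0]
    unfolding lattice_points_def mem_Collect_eq by (simp only:)
qed

lemma lattice_points_upper_slice:
  assumes M: "matroid_rank E r" and e: "e \<in> E" and z0: "z e = 0"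
    and v: "v + (r E - r (E - {e})) < u + r {e}"
  shows "z(e := int u + int (r {e}) - int v) \<in> lattice_points E r t u
    \<longleftrightarrow> z \<in> lattice_points (E - {e}) (contract_rank r e) t v"
proof -
  let ?k = "int u + int (r {e}) - int v"
  have contract: "int (contract_rank r e Y) = int (r (insert e Y)) - int (r {e})"
    if "Y \<subseteq> E - {e}" for Y
  proof -
    have "insert e Y \<subseteq> E" using that e by blast
    then show ?thesis
      using matroid_rank_mono[OF M, of "{e}" "insert e Y"] by (simp add: contract_rank_def)
  qed
  have "insert e (E - {e}) = E" using e by blast
  then have sum_iff: "(\<Sum>a\<in>E - {e}. z a) + ?k = int (r E) + int u - int t
      \<longleftrightarrow> (\<Sum>a\<in>E - {e}. z a) = int (contract_rank r e (E - {e})) + int v - int t"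
    using contract[of "E - {e}"] by simp linarith
  have "v \<le> u" using v matroid_rank_singleton_le[OF M e] by linarith
  have "(\<Sum>a\<in>Y. z a) \<le> int (r Y) + int u"
    if "Y \<subseteq> E - {e}" "(\<Sum>a\<in>Y. z a) + ?k \<le> int (r (insert e Y)) + int u" for Y
  proof -
    have "Y \<subseteq> E" using that(1) by blast
    then show ?thesis using that(2) \<open>v \<le> u\<close> matroid_rank_insert_le[OF M, of Y e] e by linarith
  qed
  moreover have "(\<Sum>a\<in>Y. z a) + ?k \<le> int (r (insert e Y)) + int u
      \<longleftrightarrow> (\<Sum>a\<in>Y. z a) \<le> int (contract_rank r e Y) + int v" if "Y \<subseteq> E - {e}" for Y
    using contract[OF that] by linarith
  ultimately have "(\<forall>Y. Y \<subseteq> E - {e} \<longrightarrow> (\<Sum>a\<in>Y. z a) \<le> int (r Y) + int u \<and>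
        (\<Sum>a\<in>Y. z a) + ?k \<le> int (r (insert e Y)) + int u)
      \<longleftrightarrow> (\<forall>Y. Y \<subseteq> E - {e} \<longrightarrow> (\<Sum>a\<in>Y. z a) \<le> int (contract_rank r e Y) + int v)"
    by blast
  with sum_iff show ?thesis
    unfolding lattice_point_fun_upd_iff[where z = z, OF M e z0]
    unfolding lattice_points_def mem_Collect_eq by (simp only:)
qed

lemma lattice_point_slice_cases:
  assumes M: "matroid_rank E r" and e: "e \<in> E" and z: "z \<in> lattice_points E r t u"
  obtains (deletion) s where "s \<le> t" "z(e := 0) \<in> lattice_points (E - {e}) r s u"
      "z e = int s - int t + int (r E - r (E - {e}))"
    | (contraction) v where "v + (r E - r (E - {e})) < u + r {e}"
      "z(e := 0) \<in> lattice_points (E - {e}) (contract_rank r e) t v"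
      "z e = int u + int (r {e}) - int v"
proof (cases "z e \<le> int (r E - r (E - {e}))")
  case True
  have "r (E - {e}) \<le> r E" using matroid_rank_mono[OF M, of "E - {e}" E] by blast
  then have "int (r E - r (E - {e})) - int t \<le> z e"
    using lattice_point_coord_ge[OF M z e] by (simp add: of_nat_diff)
  then have s: "nat (int t + z e - int (r E - r (E - {e}))) \<le> t"
    "z e = int (nat (int t + z e - int (r E - r (E - {e})))) - int t + int (r E - r (E - {e}))"
    using True by simp_all
  then show thesis
    using lattice_points_lower_slice[where z = "z(e := 0)", OF M e _ s(1)] z
    by (intro deletion[OF s(1) _ s(2)]) simp
next
  case False
  then have v: "nat (int u + int (r {e}) - z e) + (r E - r (E - {e})) < u + r {e}"
    "z e = int u + int (r {e}) - int (nat (int u + int (r {e}) - z e))"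
    using lattice_point_coord_le[OF z e] by simp_all
  then show thesis
    using lattice_points_upper_slice[where z = "z(e := 0)", OF M e _ v(1)] z
    by (intro contraction[OF v(1) _ v(2)]) simp
qed

lemma lattice_points_deletion_contraction:
  assumes M: "matroid_rank E r" and e: "e \<in> E"
  shows "lattice_points E r t u =
    (\<Union>s\<in>{..t}. (\<lambda>z. z(e := int s - int t + int (r E - r (E - {e}))))
        ` lattice_points (E - {e}) r s u) \<union>
    (\<Union>v\<in>{v. v + (r E - r (E - {e})) < u + r {e}}. (\<lambda>z. z(e := int u + int (r {e}) - int v))
        ` lattice_points (E - {e}) (contract_rank r e) t v)"
    (is "_ = ?D \<union> ?C")
proof (intro set_eqI iffI)
  fix z assume z: "z \<in> lattice_points E r t u"
  from M e z show "z \<in> ?D \<union> ?C"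
  proof (cases rule: lattice_point_slice_cases)
    case (deletion s)
    then have "z \<in> (\<lambda>z. z(e := int s - int t + int (r E - r (E - {e}))))
        ` lattice_points (E - {e}) r s u"
      using deletion(2,3) by (intro image_eqI[of z _ "z(e := 0)"]) auto
    then show ?thesis using deletion(1) by (intro UnI1 UN_I[of s]) simp_all
  next
    case (contraction v)
    then have "z \<in> (\<lambda>z. z(e := int u + int (r {e}) - int v))
        ` lattice_points (E - {e}) (contract_rank r e) t v"
      using contraction(2,3) by (intro image_eqI[of z _ "z(e := 0)"]) auto
    then show ?thesis using contraction(1) by (intro UnI2 UN_I[of v]) simp_all
  qed
next
  fix z assume "z \<in> ?D \<union> ?C"
  then show "z \<in> lattice_points E r t u"
  proof
    assume "z \<in> ?D"
    then obtain s z' where s: "s \<le> t" and z': "z' \<in> lattice_points (E - {e}) r s u"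
      and z: "z = z'(e := int s - int t + int (r E - r (E - {e})))" by (auto elim!: UN_E)
    have "z' e = 0" using lattice_point_outside[OF z'] by simp
    then show ?thesis using lattice_points_lower_slice[where z = z', OF M e _ s] z z' by simp
  next
    assume "z \<in> ?C"
    then obtain v z' where v: "v + (r E - r (E - {e})) < u + r {e}"
      and z': "z' \<in> lattice_points (E - {e}) (contract_rank r e) t v"
      and z: "z = z'(e := int u + int (r {e}) - int v)" by (auto elim!: UN_E)
    have "z' e = 0" using lattice_point_outside[OF z'] by simp
    then show ?thesis using lattice_points_upper_slice[where z = z', OF M e _ v] z z' by simp
  qed
qed

section \<open>Counting lattice points\<close>

lemma card_UN_fun_upd:
  assumes "finite I" "inj_on h I" "\<And>i. i \<in> I \<Longrightarrow> finite (F i)"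
    "\<And>i z. i \<in> I \<Longrightarrow> z \<in> F i \<Longrightarrow> z e = 0"
  shows "card (\<Union>i\<in>I. (\<lambda>z. z(e := h i)) ` F i) = (\<Sum>i\<in>I. card (F i))"
proof -
  have "card (\<Union>i\<in>I. (\<lambda>z. z(e := h i)) ` F i) = (\<Sum>i\<in>I. card ((\<lambda>z. z(e := h i)) ` F i))"
  proof (rule card_UN_disjoint)
    show "\<forall>i\<in>I. \<forall>j\<in>I. i \<noteq> j \<longrightarrow> (\<lambda>z. z(e := h i)) ` F i \<inter> (\<lambda>z. z(e := h j)) ` F j = {}"
      using assms(2) by (auto simp: inj_on_eq_iff dest: fun_cong[of _ _ e])
  qed (use assms in auto)
  also have "\<dots> = (\<Sum>i\<in>I. card (F i))"
  proof (rule sum.cong)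
    fix i assume i: "i \<in> I"
    have "inj_on (\<lambda>z. z(e := h i)) (F i)"
      by (rule inj_onI) (metis assms(4)[OF i] fun_upd_idem_iff fun_upd_upd)
    then show "card ((\<lambda>z. z(e := h i)) ` F i) = card (F i)" by (rule card_image)
  qed simp
  finally show ?thesis .
qed

lemma card_lattice_points_deletion_contraction:
  assumes M: "matroid_rank E r" and e: "e \<in> E"
  shows "card (lattice_points E r t u) = (\<Sum>s\<le>t. card (lattice_points (E - {e}) r s u)) +
    (\<Sum>v\<in>{v. v + (r E - r (E - {e})) < u + r {e}}. card (lattice_points (E - {e}) (contract_rank r e) t v))"
proof -
  let ?d = "r E - r (E - {e})"
  let ?D = "\<Union>s\<in>{..t}. (\<lambda>z. z(e := int s - int t + int ?d)) ` lattice_points (E - {e}) r s u"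
  let ?C = "\<Union>v\<in>{v. v + ?d < u + r {e}}. (\<lambda>z. z(e := int u + int (r {e}) - int v))
        ` lattice_points (E - {e}) (contract_rank r e) t v"
  have M': "matroid_rank (E - {e}) r" "matroid_rank (E - {e}) (contract_rank r e)"
    using matroid_rank_subset[OF M] matroid_rank_contract[OF M e] by auto
  have fin: "finite {v. v + ?d < u + r {e}}" by (rule finite_subset[of _ "{..<u + r {e}}"]) auto
  have card_D: "card ?D = (\<Sum>s\<le>t. card (lattice_points (E - {e}) r s u))"
    by (rule card_UN_fun_upd)
      (auto simp: inj_on_def finite_lattice_points[OF M'(1)] intro: lattice_point_outside)
  have card_C: "card ?C = (\<Sum>v\<in>{v. v + ?d < u + r {e}}.
      card (lattice_points (E - {e}) (contract_rank r e) t v))"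
    by (rule card_UN_fun_upd)
      (auto simp: fin inj_on_def finite_lattice_points[OF M'(2)] intro: lattice_point_outside)
  have "?D \<inter> ?C = {}" by (auto dest: fun_cong[of _ _ e])
  moreover have "finite ?D" "finite ?C" using fin finite_lattice_points[OF M'(1)]
      finite_lattice_points[OF M'(2)] by auto
  ultimately have "card (?D \<union> ?C) = card ?D + card ?C" by (rule card_Un_disjoint[rotated 2])
  then show ?thesis using lattice_points_deletion_contraction[OF M e, of t u] card_D card_C by simp
qed

lemma Diff_singleton_nonempty_if_card_ge_2: "2 \<le> card E \<Longrightarrow> E - {e} \<noteq> {}"
  using card_mono[of "{e}" E] by fastforce

lemma Q_count_deletion_contraction:
  assumes M: "matroid_rank E r" and "card E \<ge> 2" and e: "e \<in> E"
  shows "Q_count E r t u = (\<Sum>s\<le>t. Q_count (E - {e}) r s u) +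
    (\<Sum>v<u + connectivity E r {e}. Q_count (E - {e}) (contract_rank r e) t v)"
proof -
  have ne: "E - {e} \<noteq> {}" using Diff_singleton_nonempty_if_card_ge_2[OF assms(2)] .
  moreover
  have "r (E - {e}) \<le> r E" "r E \<le> r (E - {e}) + r {e}"
    using matroid_rank_mono[OF M, of "E - {e}" E] matroid_rank_insert_le[OF M, of "E - {e}" e] e
    by (auto simp: insert_absorb)
  then have "{v. v + (r E - r (E - {e})) < u + r {e}} = {..<u + connectivity E r {e}}"
    by (auto simp: connectivity_def)
  ultimately show ?thesis
    using card_lattice_points_deletion_contraction[OF M e, of t u]
      Q_count_eq_card_lattice_points[OF M, of t u] e
      Q_count_eq_card_lattice_points[OF matroid_rank_subset[OF M Diff_subset] ne]
      Q_count_eq_card_lattice_points[OF matroid_rank_contract[OF M e] ne]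
    by auto
qed

lemma Q_count_singleton:
  assumes M: "matroid_rank {e} r"
  shows "Q_count {e} r t u = 1"
proof -
  have "lattice_points {e} r t u = {(\<lambda>a. 0)(e := int (r {e}) + int u - int t)}"
  proof (intro set_eqI iffI)
    fix z assume z: "z \<in> lattice_points {e} r t u"
    have "z = (\<lambda>a. 0)(e := int (r {e}) + int u - int t)"
      using lattice_point_sum_eq[OF z] lattice_point_outside[OF z] by (auto simp: fun_eq_iff)
    then show "z \<in> {(\<lambda>a. 0)(e := int (r {e}) + int u - int t)}" by simp
  next
    fix z assume "z \<in> {(\<lambda>a. 0)(e := int (r {e}) + int u - int t)}"
    then show "z \<in> lattice_points {e} r t u"
      using matroid_rank_empty[OF M] by (auto simp: lattice_points_def dest!: subset_singletonD)
  qed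
  then show ?thesis using Q_count_eq_card_lattice_points[OF M] by simp
qed

section \<open>Binomial expansions\<close>

definition coeff_sum :: "(nat \<times> nat \<Rightarrow> real) \<Rightarrow> (nat \<times> nat \<Rightarrow> real) \<Rightarrow> real" where
  "coeff_sum c g = (\<Sum>p\<in>{p. c p \<noteq> 0}. c p * g p)"

definition binomial_expansion :: "(nat \<times> nat \<Rightarrow> real) \<Rightarrow> (nat \<Rightarrow> nat \<Rightarrow> nat) \<Rightarrow> bool" where
  "binomial_expansion c f \<longleftrightarrow> finite {p. c p \<noteq> 0} \<and>
     (\<forall>t u. real (f t u) = coeff_sum c (\<lambda>p. real (u choose snd p) * real (t choose fst p)))"

definition shift_fst :: "(nat \<times> nat \<Rightarrow> real) \<Rightarrow> nat \<times> nat \<Rightarrow> real" where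
  "shift_fst a p = (if fst p = 0 then 0 else a (fst p - 1, snd p))"

definition shift_snd :: "(nat \<times> nat \<Rightarrow> real) \<Rightarrow> nat \<times> nat \<Rightarrow> real" where
  "shift_snd a p = (if snd p = 0 then 0 else a (fst p, snd p - 1))"

lemma coeff_sum_superset:
  "finite S \<Longrightarrow> {p. c p \<noteq> 0} \<subseteq> S \<Longrightarrow> coeff_sum c g = (\<Sum>p\<in>S. c p * g p)"
  unfolding coeff_sum_def by (rule sum.mono_neutral_left) auto

lemma coeff_sum_add:
  assumes "finite {p. a p \<noteq> 0}" "finite {p. b p \<noteq> 0}"
  shows "coeff_sum (\<lambda>p. a p + b p) g = coeff_sum a g + coeff_sum b g"
proof -
  let ?S = "{p. a p \<noteq> 0} \<union> {p. b p \<noteq> 0}"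
  have "finite ?S" using assms by simp
  then show ?thesis
    by (subst (1 2 3) coeff_sum_superset[of ?S]) (auto simp: distrib_right sum.distrib)
qed

lemma coeff_sum_scale_fun: "coeff_sum a (\<lambda>p. k * g p) = k * coeff_sum a g"
  by (simp add: coeff_sum_def sum_distrib_left mult.left_commute)

lemma coeff_sum_scale: "coeff_sum (\<lambda>p. k * a p) g = k * coeff_sum a g"
  by (cases "k = 0") (simp_all add: coeff_sum_def sum_distrib_left mult.assoc)

lemma coeff_sum_sum: "coeff_sum a (\<lambda>p. \<Sum>s\<in>A. g s p) = (\<Sum>s\<in>A. coeff_sum a (g s))"
  by (simp add: coeff_sum_def sum_distrib_left sum.swap[of _ A])

lemma support_shift_fst: "{p. shift_fst a p \<noteq> 0} = (\<lambda>p. (Suc (fst p), snd p)) ` {p. a p \<noteq> 0}"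
  by (auto simp: shift_fst_def image_iff split: if_splits) (metis Suc_pred)

lemma support_shift_snd: "{p. shift_snd a p \<noteq> 0} = (\<lambda>p. (fst p, Suc (snd p))) ` {p. a p \<noteq> 0}"
  by (auto simp: shift_snd_def image_iff split: if_splits) (metis Suc_pred)

lemma coeff_sum_shift_fst: "coeff_sum (shift_fst a) g = coeff_sum a (\<lambda>p. g (Suc (fst p), snd p))"
proof -
  have "inj_on (\<lambda>p. (Suc (fst p), snd p)) {p. a p \<noteq> 0}" by (auto simp: inj_on_def prod_eq_iff)
  then show ?thesis
    unfolding coeff_sum_def support_shift_fst by (simp add: sum.reindex shift_fst_def)
qed

lemma coeff_sum_shift_snd: "coeff_sum (shift_snd a) g = coeff_sum a (\<lambda>p. g (fst p, Suc (snd p)))"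
proof -
  have "inj_on (\<lambda>p. (fst p, Suc (snd p))) {p. a p \<noteq> 0}" by (auto simp: inj_on_def prod_eq_iff)
  then show ?thesis
    unfolding coeff_sum_def support_shift_snd by (simp add: sum.reindex shift_snd_def)
qed

text \<open>A nonzero coefficient of the difference at a p of least total degree is detected by
  evaluating at (t, u) = p, since (t choose i) vanishes for i > t.\<close>
lemma binomial_expansion_unique:
  assumes "binomial_expansion c f" "binomial_expansion d f"
  shows "c = d"
proof (rule ccontr)
  assume "c \<noteq> d"
  define S where "S = {p. c p \<noteq> 0} \<union> {p. d p \<noteq> 0}"
  have fS: "finite S" using assms by (simp add: binomial_expansion_def S_def)
  define e where "e p = c p - d p" for p
  let ?B = "\<lambda>t u p. real (u choose snd p) * real (t choose fst p)"
  have zero: "(\<Sum>p\<in>S. e p * ?B t u p) = 0" for t u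
  proof -
    have "real (f t u) = (\<Sum>p\<in>S. c p * ?B t u p)" "real (f t u) = (\<Sum>p\<in>S. d p * ?B t u p)"
      using assms coeff_sum_superset[OF fS] by (auto simp: binomial_expansion_def S_def)
    then show ?thesis by (simp add: e_def left_diff_distrib sum_subtractf)
  qed
  obtain q0 where "e q0 \<noteq> 0" using \<open>c \<noteq> d\<close> by (auto simp: e_def fun_eq_iff)
  then obtain p where p: "e p \<noteq> 0" and pmin: "\<And>q. e q \<noteq> 0 \<Longrightarrow> fst p + snd p \<le> fst q + snd q"
    using ex_has_least_nat[of "\<lambda>p. e p \<noteq> 0" q0 "\<lambda>p. fst p + snd p"] by blast
  have pS: "p \<in> S" using p by (auto simp: S_def e_def)
  have others: "e q * ?B (fst p) (snd p) q = 0" if "q \<in> S - {p}" for q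
  proof (cases "e q = 0")
    case False
    then have "fst p < fst q \<or> snd p < snd q"
      using pmin[OF False] that by (cases p, cases q) auto
    then show ?thesis by (auto simp: binomial_eq_0)
  qed simp
  have "(\<Sum>q\<in>S - {p}. e q * ?B (fst p) (snd p) q) = 0" by (rule sum.neutral) (use others in blast)
  then have "(\<Sum>q\<in>S. e q * ?B (fst p) (snd p) q) = e p"
    using sum.remove[OF fS pS, of "\<lambda>q. e q * ?B (fst p) (snd p) q"] by simp
  then show False using zero[where t = "fst p" and u = "snd p"] p by simp
qed

lemma Q'_eq_coeff_sum:
  assumes "binomial_expansion c (Q_count E r)"
  shows "Q' E r x y = coeff_sum c (\<lambda>p. (x - 1) ^ fst p * (y - 1) ^ snd p)"
proof -
  have "Q_coeffs E r = (SOME c. binomial_expansion c (Q_count E r))"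
    unfolding Q_coeffs_def binomial_expansion_def coeff_sum_def by (simp only: mult.assoc)
  then have "binomial_expansion (Q_coeffs E r) (Q_count E r)"
    using someI[of "\<lambda>c. binomial_expansion c (Q_count E r)", OF assms] by simp
  then have "Q_coeffs E r = c" using binomial_expansion_unique assms by blast
  then show ?thesis by (simp add: Q'_def coeff_sum_def mult.assoc)
qed

lemma binomial_expansion_cong:
  "binomial_expansion c f \<Longrightarrow> (\<And>t u. f t u = g t u) \<Longrightarrow> binomial_expansion c g"
  by (simp add: binomial_expansion_def)

lemma binomial_expansion_add:
  assumes "binomial_expansion a F" "binomial_expansion b G"
  shows "binomial_expansion (\<lambda>p. a p + b p) (\<lambda>t u. F t u + G t u)"
proof -
  have fin: "finite {p. a p \<noteq> 0}" "finite {p. b p \<noteq> 0}"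
    using assms by (auto simp: binomial_expansion_def)
  then have "finite {p. a p + b p \<noteq> 0}"
    by (rule finite_subset[rotated, OF finite_UnI]) auto
  with assms show ?thesis by (simp add: binomial_expansion_def coeff_sum_add[OF fin])
qed

lemma binomial_expansion_scale:
  assumes "binomial_expansion b G"
  shows "binomial_expansion (\<lambda>p. real m * b p) (\<lambda>t u. m * G t u)"
proof -
  have "finite {p. b p \<noteq> 0}" using assms by (simp add: binomial_expansion_def)
  then have "finite {p. real m * b p \<noteq> 0}" by (rule finite_subset[rotated]) auto
  with assms show ?thesis by (simp add: binomial_expansion_def coeff_sum_scale)
qed

lemma sum_lessThan_choose: "(\<Sum>s<t. real (s choose i)) = real (t choose Suc i)"
proof (cases t)
  case (Suc n)
  have "(\<Sum>s<Suc n. s choose i) = Suc n choose Suc i"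
    by (simp only: lessThan_Suc_atMost sum_choose_upper)
  then show ?thesis using Suc by (metis of_nat_sum)
qed simp

lemma binomial_expansion_shift_fst:
  assumes "binomial_expansion a F"
  shows "binomial_expansion (shift_fst a) (\<lambda>t u. \<Sum>s<t. F s u)"
  unfolding binomial_expansion_def
proof (intro conjI allI)
  show "finite {p. shift_fst a p \<noteq> 0}"
    using assms by (simp add: binomial_expansion_def support_shift_fst)
  fix t u
  have "real (\<Sum>s<t. F s u)
      = coeff_sum a (\<lambda>p. \<Sum>s<t. real (u choose snd p) * real (s choose fst p))"
    using assms by (simp add: binomial_expansion_def coeff_sum_sum)
  also have "\<dots> = coeff_sum a (\<lambda>p. real (u choose snd p) * real (t choose Suc (fst p)))"
    by (simp add: sum_distrib_left[symmetric] sum_lessThan_choose)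
  finally show "real (\<Sum>s<t. F s u)
      = coeff_sum (shift_fst a) (\<lambda>p. real (u choose snd p) * real (t choose fst p))"
    by (simp add: coeff_sum_shift_fst)
qed

lemma binomial_expansion_shift_snd:
  assumes "binomial_expansion a F"
  shows "binomial_expansion (shift_snd a) (\<lambda>t u. \<Sum>v<u. F t v)"
  unfolding binomial_expansion_def
proof (intro conjI allI)
  show "finite {p. shift_snd a p \<noteq> 0}"
    using assms by (simp add: binomial_expansion_def support_shift_snd)
  fix t u
  have "real (\<Sum>v<u. F t v)
      = coeff_sum a (\<lambda>p. \<Sum>v<u. real (v choose snd p) * real (t choose fst p))"
    using assms by (simp add: binomial_expansion_def coeff_sum_sum)
  also have "\<dots> = coeff_sum a (\<lambda>p. real (u choose Suc (snd p)) * real (t choose fst p))"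
    by (simp add: sum_distrib_right[symmetric] sum_lessThan_choose)
  finally show "real (\<Sum>v<u. F t v)
      = coeff_sum (shift_snd a) (\<lambda>p. real (u choose snd p) * real (t choose fst p))"
    by (simp add: coeff_sum_shift_snd)
qed

section \<open>Deletion and contraction for Q'\<close>

lemma binomial_expansion_deletion_contraction:
  assumes a: "binomial_expansion a F" and b: "binomial_expansion b G" and "m \<le> 1"
    and H: "\<And>t u. H t u = (\<Sum>s\<le>t. F s u) + (\<Sum>v<u + m. G t v)"
  shows "binomial_expansion (\<lambda>p. (a p + shift_fst a p) + (real m * b p + shift_snd b p)) H"
proof -
  have expansion: "binomial_expansion (\<lambda>p. (a p + shift_fst a p) + (real m * b p + shift_snd b p))
      (\<lambda>t u. (F t u + (\<Sum>s<t. F s u)) + (m * G t u + (\<Sum>v<u. G t v)))"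
    by (intro binomial_expansion_add binomial_expansion_shift_fst binomial_expansion_shift_snd
        binomial_expansion_scale a b)
  have sum_split: "(\<Sum>v<u + m. G t v) = m * G t u + (\<Sum>v<u. G t v)" for t u
  proof -
    consider "m = 0" | "m = 1" using \<open>m \<le> 1\<close> by linarith
    then show ?thesis by cases simp_all
  qed
  show ?thesis
    using expansion by (rule binomial_expansion_cong) (simp add: H sum_split lessThan_Suc_atMost[symmetric])
qed

lemma coeff_sum_deletion_contraction:
  fixes x y k :: real
  assumes "finite {p. a p \<noteq> 0}" "finite {p. b p \<noteq> 0}"
  defines "mon \<equiv> \<lambda>p. (x - 1) ^ fst p * (y - 1) ^ snd p"
  shows "coeff_sum (\<lambda>p. (a p + shift_fst a p) + (k * b p + shift_snd b p)) mon
    = x * coeff_sum a mon + (y - 1 + k) * coeff_sum b mon"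
proof -
  have fin: "finite {p. shift_fst a p \<noteq> 0}" "finite {p. shift_snd b p \<noteq> 0}"
      "finite {p. k * b p \<noteq> 0}"
    using assms(1,2) finite_subset[of "{p. k * b p \<noteq> 0}" "{p. b p \<noteq> 0}"]
    by (auto simp: support_shift_fst support_shift_snd)
  have "finite {p. a p + shift_fst a p \<noteq> 0}"
    by (rule finite_subset[OF _ finite_UnI[OF assms(1) fin(1)]]) auto
  moreover have "finite {p. k * b p + shift_snd b p \<noteq> 0}"
    by (rule finite_subset[OF _ finite_UnI[OF fin(3) fin(2)]]) auto
  ultimately have "coeff_sum (\<lambda>p. (a p + shift_fst a p) + (k * b p + shift_snd b p)) mon
      = coeff_sum a mon + coeff_sum (shift_fst a) mon
        + (k * coeff_sum b mon + coeff_sum (shift_snd b) mon)"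
    using assms(1,2) fin by (simp add: coeff_sum_add coeff_sum_scale)
  also have "coeff_sum (shift_fst a) mon = (x - 1) * coeff_sum a mon"
    by (simp add: mon_def coeff_sum_shift_fst flip: coeff_sum_scale_fun) (simp add: mult.assoc)
  also have "coeff_sum (shift_snd b) mon = (y - 1) * coeff_sum b mon"
    by (simp add: mon_def coeff_sum_shift_snd flip: coeff_sum_scale_fun) (simp add: mult_ac)
  finally show ?thesis by (simp add: algebra_simps)
qed

lemma Q_count_binomial_expansion:
  "matroid_rank E r \<Longrightarrow> E \<noteq> {} \<Longrightarrow> \<exists>c. binomial_expansion c (Q_count E r)"
proof (induction "card E" arbitrary: E r rule: less_induct)
  case less
  note M = less.prems(1)
  obtain e where e: "e \<in> E" using less.prems(2) by blast
  show ?case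
  proof (cases "card E \<ge> 2")
    case False
    moreover have "card E > 0" using less.prems(2) matroid_rank_finite[OF M] by auto
    ultimately have "card E = 1" by linarith
    then obtain a where "E = {a}" by (rule card_1_singletonE)
    then have "binomial_expansion (\<lambda>p. of_bool (p = (0, 0))) (Q_count E r)"
      using Q_count_singleton[of a r] M
      by (simp add: binomial_expansion_def coeff_sum_def of_bool_def)
    then show ?thesis by blast
  next
    case True
    have lt: "card (E - {e}) < card E"
      using card_Diff1_less[OF matroid_rank_finite[OF M] e] .
    note ne = Diff_singleton_nonempty_if_card_ge_2[OF True]
    obtain a where a: "binomial_expansion a (Q_count (E - {e}) r)"
      using less.hyps[OF lt matroid_rank_subset[OF M Diff_subset] ne] by blast
    obtain b where b: "binomial_expansion b (Q_count (E - {e}) (contract_rank r e))"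
      using less.hyps[OF lt matroid_rank_contract[OF M e] ne] by blast
    have "connectivity E r {e} \<le> 1" using connectivity_singleton[OF M e] by simp
    from binomial_expansion_deletion_contraction[OF a b this]
    show ?thesis using Q_count_deletion_contraction[OF M True e] by blast
  qed
qed

theorem Q'_deletion_contraction:
  assumes M: "matroid_rank E r" and "card E \<ge> 2" and e: "e \<in> E"
  shows "Q' E r x y = x * Q' (E - {e}) r x y
    + (y - 1 + real (connectivity E r {e})) * Q' (E - {e}) (contract_rank r e) x y"
proof -
  note ne = Diff_singleton_nonempty_if_card_ge_2[OF assms(2)]
  obtain a where a: "binomial_expansion a (Q_count (E - {e}) r)"
    using Q_count_binomial_expansion[OF matroid_rank_subset[OF M Diff_subset] ne] by blast
  obtain b where b: "binomial_expansion b (Q_count (E - {e}) (contract_rank r e))"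
    using Q_count_binomial_expansion[OF matroid_rank_contract[OF M e] ne] by blast
  have "connectivity E r {e} \<le> 1" using connectivity_singleton[OF M e] by simp
  note expansion =
    binomial_expansion_deletion_contraction[OF a b this Q_count_deletion_contraction[OF assms]]
  show ?thesis
    unfolding Q'_eq_coeff_sum[OF expansion] Q'_eq_coeff_sum[OF a] Q'_eq_coeff_sum[OF b]
    by (rule coeff_sum_deletion_contraction) (use a b in \<open>simp_all add: binomial_expansion_def\<close>)
qed

lemma Q'_cong:
  assumes "\<And>X. X \<subseteq> E \<Longrightarrow> r X = r' X"
  shows "Q' E r = Q' E r'"
proof -
  have "bases E r = bases E r'" using assms by (auto simp: bases_def)
  then have "Q_count E r = Q_count E r'" unfolding Q_count_def base_polytope_def by (simp only:)
  then have "Q_coeffs E r = Q_coeffs E r'" unfolding Q_coeffs_def by (simp only:)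
  then show ?thesis unfolding Q'_def by (simp only:)
qed

theorem mainTheorem4:
  fixes E :: "'a set" and r :: "'a set \<Rightarrow> nat" and e :: 'a
  assumes "matroid_rank E r" and "card E \<ge> 2" and "e \<in> E"
  shows "(\<not> is_loop E r e \<and> \<not> is_coloop E r e \<longrightarrow>
            (\<forall>x y. Q' E r x y = x * Q' (E - {e}) (delete_rank r e) x y
                               + y * Q' (E - {e}) (contract_rank r e) x y))
       \<and> (is_loop E r e \<or> is_coloop E r e \<longrightarrow>
            (\<forall>x y. Q' E r x y = (x + y - 1) * Q' (E - {e}) (contract_rank r e) x y
                 \<and> (x + y - 1) * Q' (E - {e}) (contract_rank r e) x y
                     = (x + y - 1) * Q' (E - {e}) (delete_rank r e) x y))"
proof -
  note recursion = Q'_deletion_contraction[OF assms]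
  note conn = connectivity_singleton[OF assms(1,3)]
  show ?thesis
  proof (intro conjI impI allI)
    fix x y
    assume "\<not> is_loop E r e \<and> \<not> is_coloop E r e"
    then show "Q' E r x y = x * Q' (E - {e}) (delete_rank r e) x y
        + y * Q' (E - {e}) (contract_rank r e) x y"
      using recursion conn by (simp add: delete_rank_def)
  next
    fix x y
    assume "is_loop E r e \<or> is_coloop E r e"
    then have conn0: "connectivity E r {e} = 0" using conn by simp
    then have "Q' (E - {e}) (contract_rank r e) = Q' (E - {e}) (delete_rank r e)"
      unfolding delete_rank_def
      by (intro Q'_cong contract_rank_eq_if_connectivity_zero[OF assms(1,3)])
    then show "Q' E r x y = (x + y - 1) * Q' (E - {e}) (contract_rank r e) x y"
      "(x + y - 1) * Q' (E - {e}) (contract_rank r e) x y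
        = (x + y - 1) * Q' (E - {e}) (delete_rank r e) x y"
      using recursion conn0 by (simp_all add: delete_rank_def algebra_simps)
  qed
qed

end
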